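(* Let $T$ be a finite rooted tree in which every inner node has at least two children, with node set $V$ and leaf set $L$. If $X\subseteq V\setminus L$ is thin, then there exists a pair $(\pi,\sigma)$ of injective maps from $X$ to $L$ that has unique request and identifies $X$.
   Context: A set $X\subseteq V\setminus L$ of inner nodes is thin if for every $x\in X$ other than the root, the parent of $x$ does not belong to $X$, and $x$ has at least one sibling (possibly a leaf) that does not belong to $X$. A pair $(\pi,\sigma)$ of injective maps from $X$ to $L$ identifies $X$ if for each $s\in X$, $s$ is the least common ancestor of $\pi(s)$ and $\sigma(s)$ (every node is its own ancestor). For $s\in X$, a node $y$ is $s$-requested in $(\pi,\sigma)$ if $y$ lies on the path of $T$ from $\pi(s)$ to $\sigma(s)$; the pair has unique request if every node is $s$-requested for at most one $s\in X$. *)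

theory Defs
  imports Main
begin

text \<open>Every node reaches the root by
iterating par, which (together with par r = r) rules out cycles.\<close>

definition anc :: "('a \<Rightarrow> 'a) \<Rightarrow> 'a \<Rightarrow> 'a \<Rightarrow> bool" where
  "anc par u v \<longleftrightarrow> (\<exists>n. (par ^^ n) v = u)"

definition children :: "'a set \<Rightarrow> 'a \<Rightarrow> ('a \<Rightarrow> 'a) \<Rightarrow> 'a \<Rightarrow> 'a set" where
  "children V r par v = {u \<in> V. u \<noteq> r \<and> par u = v}"

definition leaves :: "'a set \<Rightarrow> 'a \<Rightarrow> ('a \<Rightarrow> 'a) \<Rightarrow> 'a set" where
  "leaves V r par = {v \<in> V. children V r par v = {}}"

definition rooted_tree :: "'a set \<Rightarrow> 'a \<Rightarrow> ('a \<Rightarrow> 'a) \<Rightarrow> bool" where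
  "rooted_tree V r par \<longleftrightarrow> finite V \<and> r \<in> V \<and> par r = r \<and>
     (\<forall>v\<in>V. par v \<in> V) \<and> (\<forall>v\<in>V. anc par r v)"

definition full_tree :: "'a set \<Rightarrow> 'a \<Rightarrow> ('a \<Rightarrow> 'a) \<Rightarrow> bool" where
  "full_tree V r par \<longleftrightarrow> rooted_tree V r par \<and>
     (\<forall>v \<in> V - leaves V r par. card (children V r par v) \<ge> 2)"

definition thin :: "'a set \<Rightarrow> 'a \<Rightarrow> ('a \<Rightarrow> 'a) \<Rightarrow> 'a set \<Rightarrow> bool" where
  "thin V r par X \<longleftrightarrow> X \<subseteq> V - leaves V r par \<and>
     (\<forall>x\<in>X. x \<noteq> r \<longrightarrow> par x \<notin> X \<and>
        (\<exists>y \<in> children V r par (par x). y \<noteq> x \<and> y \<notin> X))"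

definition is_lca :: "('a \<Rightarrow> 'a) \<Rightarrow> 'a \<Rightarrow> 'a \<Rightarrow> 'a \<Rightarrow> bool" where
  "is_lca par s a b \<longleftrightarrow> anc par s a \<and> anc par s b \<and>
     (\<forall>c. anc par c a \<and> anc par c b \<longrightarrow> anc par c s)"

text \<open>y lies on the tree path from a to b: y is an ancestor of a or of b and a
descendant of every common ancestor of a and b (i.e. of their lca).\<close>
definition on_path :: "('a \<Rightarrow> 'a) \<Rightarrow> 'a \<Rightarrow> 'a \<Rightarrow> 'a \<Rightarrow> bool" where
  "on_path par a b y \<longleftrightarrow> (anc par y a \<or> anc par y b) \<and>
     (\<forall>c. anc par c a \<and> anc par c b \<longrightarrow> anc par c y)"

definition identifies :: "'a set \<Rightarrow> 'a \<Rightarrow> ('a \<Rightarrow> 'a) \<Rightarrow> 'a set \<Rightarrow> ('a \<Rightarrow> 'a) \<Rightarrow> ('a \<Rightarrow> 'a) \<Rightarrow> bool" where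
  "identifies V r par X \<pi> \<sigma> \<longleftrightarrow>
     inj_on \<pi> X \<and> \<pi> ` X \<subseteq> leaves V r par \<and> inj_on \<sigma> X \<and> \<sigma> ` X \<subseteq> leaves V r par \<and>
     (\<forall>s\<in>X. is_lca par s (\<pi> s) (\<sigma> s))"

definition unique_request :: "('a \<Rightarrow> 'a) \<Rightarrow> 'a set \<Rightarrow> ('a \<Rightarrow> 'a) \<Rightarrow> ('a \<Rightarrow> 'a) \<Rightarrow> bool" where
  "unique_request par X \<pi> \<sigma> \<longleftrightarrow>
     (\<forall>y s t. s \<in> X \<and> t \<in> X \<and> on_path par (\<pi> s) (\<sigma> s) y \<and> on_path par (\<pi> t) (\<sigma> t) y
        \<longrightarrow> s = t)"

end

(* Each s in X has two distinct children, neither of them in X since X contains no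
   parent-child pair. From any node outside X one can walk down to a leaf without meeting X:
   an inner node has a child outside X, because a child in X has, by thinness, a sibling
   outside X. Take pi(s) and sigma(s) to be the ends of such walks from two distinct children
   of s; then s is their lca. If y is requested by s and by t with t strictly above s, then s,
   an ancestor of y, lies on the X-free walk from a child of t down to a leaf below y, which is
   absurd. Injectivity of pi and sigma is the special case y = pi(s), resp. y = sigma(s). *)

theory Submission
  imports Defs
begin

lemma anc_refl: "anc par v v"
  unfolding anc_def by (rule exI[of _ 0]) simp

lemma anc_par: "anc par (par v) v"
  unfolding anc_def by (rule exI[of _ 1]) simp

lemma anc_trans: "anc par a b \<Longrightarrow> anc par b c \<Longrightarrow> anc par a c"
  unfolding anc_def by (metis funpow_add comp_apply)

lemma anc_funpow_le:
  assumes "n \<le> m"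
  shows "anc par ((par ^^ m) v) ((par ^^ n) v)"
proof -
  have "(par ^^ m) v = (par ^^ (m - n)) ((par ^^ n) v)"
    using assms by (metis funpow_add comp_apply le_add_diff_inverse2)
  then show ?thesis unfolding anc_def by metis
qed

lemma anc_linear:
  assumes "anc par a v" "anc par b v"
  shows "anc par a b \<or> anc par b a"
proof -
  obtain n m where "(par ^^ n) v = b" "(par ^^ m) v = a"
    using assms unfolding anc_def by blast
  then show ?thesis using anc_funpow_le nat_le_linear by metis
qed

lemma anc_cases_par: "anc par z c \<Longrightarrow> z = c \<or> anc par z (par c)"
  unfolding anc_def by (metis funpow_Suc_right comp_apply funpow_0 not0_implies_Suc)

locale tree =
  fixes V :: "'a set" and r :: 'a and par :: "'a \<Rightarrow> 'a"
  assumes rooted: "rooted_tree V r par"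
begin

lemma finite_nodes: "finite V"
  using rooted unfolding rooted_tree_def by blast

lemma par_root: "par r = r"
  using rooted unfolding rooted_tree_def by blast

lemma funpow_par_root: "(par ^^ n) r = r"
  by (induction n) (simp_all add: par_root)

lemma funpow_cycle_root:
  assumes "v \<in> V" and cycle: "(par ^^ n) v = v" and "n > 0"
  shows "v = r"
proof -
  obtain k where k: "(par ^^ k) v = r"
    using rooted \<open>v \<in> V\<close> unfolding rooted_tree_def anc_def by blast
  have "((par ^^ n) ^^ j) v = v" for j
    by (induction j) (simp_all add: cycle)
  then have "v = (par ^^ (n * k)) v"
    by (simp add: funpow_mult)
  also have "\<dots> = (par ^^ ((n - 1) * k + k)) v"
    using \<open>n > 0\<close> by (cases n) (simp_all add: add.commute)
  also have "\<dots> = (par ^^ ((n - 1) * k)) r"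
    using k by (simp add: funpow_add)
  also have "\<dots> = r"
    by (rule funpow_par_root)
  finally show ?thesis .
qed

lemma anc_antisym:
  assumes "b \<in> V" "anc par a b" "anc par b a"
  shows "a = b"
proof -
  obtain n m where n: "(par ^^ n) b = a" and m: "(par ^^ m) a = b"
    using assms(2,3) unfolding anc_def by blast
  then have "(par ^^ (m + n)) b = b" by (simp add: funpow_add)
  show ?thesis
  proof (cases "n = 0")
    case False
    then have "b = r" using funpow_cycle_root[OF \<open>b \<in> V\<close> \<open>(par ^^ (m + n)) b = b\<close>] by simp
    then show ?thesis using n funpow_par_root by simp
  qed (use n in simp)
qed

lemma childrenD:
  assumes "c \<in> children V r par s"
  shows "c \<in> V" "par c = s" "c \<noteq> r" "s \<in> V"
proof -
  show "c \<in> V" "par c = s" "c \<noteq> r"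
    using assms unfolding children_def by simp_all
  then show "s \<in> V"
    using rooted unfolding rooted_tree_def by blast
qed

lemma parent_anc_child:
  assumes "c \<in> children V r par s"
  shows "anc par s c"
  using anc_par[of par c] childrenD(2)[OF assms] by simp

lemma child_not_anc_parent:
  assumes c: "c \<in> children V r par s"
  shows "\<not> anc par c s"
proof
  assume "anc par c s"
  then have "s = c" using anc_antisym childrenD(1)[OF c] parent_anc_child[OF c] by blast
  then have "par c = c" using childrenD(2)[OF c] by simp
  then show False using funpow_cycle_root[of c 1] childrenD(1,3)[OF c] by simp
qed

lemma children_incomparable:
  assumes "c1 \<in> children V r par s" "c2 \<in> children V r par s" "anc par c1 c2"
  shows "c1 = c2"
  using anc_cases_par[OF assms(3)] childrenD(2)[OF assms(2)] child_not_anc_parent[OF assms(1)]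
  by auto

lemma child_anc_below:
  assumes c: "c \<in> children V r par s" and "anc par c l"
    and "anc par s x" "x \<noteq> s" "anc par x l"
  shows "anc par c x"
  using anc_linear[OF \<open>anc par x l\<close> \<open>anc par c l\<close>]
proof
  assume "anc par x c"
  then have "x = c \<or> anc par x s" using anc_cases_par childrenD(2)[OF c] by metis
  moreover have "\<not> anc par x s"
    using anc_antisym[OF childrenD(4)[OF c]] \<open>anc par s x\<close> \<open>x \<noteq> s\<close> by blast
  ultimately show ?thesis using anc_refl[of par c] by auto
qed

definition descendants :: "'a \<Rightarrow> 'a set" where
  "descendants u = {v \<in> V. anc par u v}"

lemma card_descendants_child_less:
  assumes c: "c \<in> children V r par u"
  shows "card (descendants c) < card (descendants u)"
proof (rule psubset_card_mono)
  show "finite (descendants u)"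
    using finite_nodes unfolding descendants_def by simp
  have "descendants c \<subseteq> descendants u"
    using anc_trans[OF parent_anc_child[OF c]] unfolding descendants_def by blast
  moreover have "u \<in> descendants u - descendants c"
    using childrenD(4)[OF c] anc_refl child_not_anc_parent[OF c] unfolding descendants_def by simp
  ultimately show "descendants c \<subset> descendants u"
    by blast
qed

lemma lca_of_children:
  assumes c1: "c1 \<in> children V r par s" and c2: "c2 \<in> children V r par s" and "c1 \<noteq> c2"
    and a: "anc par c1 a" and b: "anc par c2 b"
  shows "is_lca par s a b"
  unfolding is_lca_def
proof (intro conjI allI impI)
  show "anc par s a" "anc par s b"
    using anc_trans[OF parent_anc_child[OF c1] a] anc_trans[OF parent_anc_child[OF c2] b] by auto
  fix x assume x: "anc par x a \<and> anc par x b"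
  show "anc par x s"
  proof (rule ccontr)
    assume "\<not> anc par x s"
    moreover have "anc par x s \<or> anc par s x"
      using anc_linear[of par x a s] x \<open>anc par s a\<close> by blast
    ultimately have "anc par s x" "x \<noteq> s" using anc_refl by auto
    then have "anc par c1 x" "anc par c2 x"
      using child_anc_below[OF c1 a] child_anc_below[OF c2 b] x by blast+
    then show False
      using anc_linear[of par c1 x c2] children_incomparable[OF c1 c2] children_incomparable[OF c2 c1]
        \<open>c1 \<noteq> c2\<close>
      by blast
  qed
qed

end

locale thin_in_tree = tree +
  fixes X :: "'a set"
  assumes thin: "thin V r par X"
begin

lemma child_of_thin_notin:
  assumes "s \<in> X" "c \<in> children V r par s"
  shows "c \<notin> X"
  using thin assms childrenD(2,3)[OF assms(2)] unfolding thin_def by blast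

lemma inner_node_has_child_notin:
  assumes "w \<in> V" "w \<notin> leaves V r par"
  obtains c where "c \<in> children V r par w" "c \<notin> X"
proof -
  obtain c where c: "c \<in> children V r par w"
    using assms unfolding leaves_def by blast
  show ?thesis
  proof (cases "c \<in> X")
    case True
    then obtain c' where "c' \<in> children V r par (par c)" "c' \<notin> X"
      using thin childrenD[OF c] unfolding thin_def by blast
    then show ?thesis using that childrenD[OF c] by simp
  qed (use c that in blast)
qed

definition X_free_leaf_path :: "'a \<Rightarrow> 'a \<Rightarrow> bool" where
  "X_free_leaf_path u l \<longleftrightarrow> l \<in> leaves V r par \<and> anc par u l \<and>
     (\<forall>z. anc par u z \<and> anc par z l \<longrightarrow> z \<notin> X)"

lemma X_free_leaf_path_leaf:
  assumes "u \<in> leaves V r par" "u \<notin> X"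
  shows "X_free_leaf_path u u"
proof -
  have "u \<in> V" using assms(1) unfolding leaves_def by blast
  then have "z \<notin> X" if "anc par u z" "anc par z u" for z
    using anc_antisym[OF _ that(2,1)] assms(2) by simp
  then show ?thesis
    unfolding X_free_leaf_path_def using assms(1) anc_refl[of par u] by auto
qed

lemma X_free_leaf_path_parent:
  assumes c: "c \<in> children V r par u" and "u \<notin> X" and path: "X_free_leaf_path c l"
  shows "X_free_leaf_path u l"
proof -
  have leaf: "l \<in> leaves V r par" and "anc par c l"
    and free: "\<And>z. anc par c z \<Longrightarrow> anc par z l \<Longrightarrow> z \<notin> X"
    using path unfolding X_free_leaf_path_def by auto
  have "z \<notin> X" if "anc par u z" "anc par z l" for z
  proof (cases "z = u")
    case False
    then show ?thesis
      using child_anc_below[OF c \<open>anc par c l\<close>] that free by blast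
  qed (use \<open>u \<notin> X\<close> in blast)
  then show ?thesis
    unfolding X_free_leaf_path_def
    using leaf anc_trans[OF parent_anc_child[OF c] \<open>anc par c l\<close>] by blast
qed

lemma X_free_leaf_path_exists:
  "u \<in> V \<Longrightarrow> u \<notin> X \<Longrightarrow> \<exists>l. X_free_leaf_path u l"
proof (induction u rule: measure_induct_rule[where f = "\<lambda>u. card (descendants u)"])
  case (less u)
  show ?case
  proof (cases "u \<in> leaves V r par")
    case True
    then show ?thesis using X_free_leaf_path_leaf less.prems(2) by blast
  next
    case False
    then obtain c where c: "c \<in> children V r par u" "c \<notin> X"
      using inner_node_has_child_notin less.prems(1) by blast
    then obtain l where "X_free_leaf_path c l"
      using less.IH card_descendants_child_less childrenD(1) by blast
    then show ?thesis
      using X_free_leaf_path_parent c(1) less.prems(2) by blast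
  qed
qed

definition splits :: "'a \<Rightarrow> 'a \<Rightarrow> 'a \<Rightarrow> bool" where
  "splits s a b \<longleftrightarrow> (\<exists>c1 c2. c1 \<in> children V r par s \<and> c2 \<in> children V r par s \<and> c1 \<noteq> c2 \<and>
     X_free_leaf_path c1 a \<and> X_free_leaf_path c2 b)"

lemma splits_exists:
  assumes "full_tree V r par" "s \<in> X"
  shows "\<exists>a b. splits s a b"
proof -
  have "s \<in> V - leaves V r par" using thin assms(2) unfolding thin_def by blast
  then have "card (children V r par s) \<ge> 2" using assms(1) unfolding full_tree_def by blast
  then obtain c1 c2 where c: "c1 \<in> children V r par s" "c2 \<in> children V r par s" "c1 \<noteq> c2"
    by (metis One_nat_def card.infinite card_le_Suc0_iff_eq not_less_eq_eq numeral_2_eq_2 zero_le)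
  moreover have "\<exists>l. X_free_leaf_path c l" if "c \<in> children V r par s" for c
    using X_free_leaf_path_exists childrenD(1) child_of_thin_notin assms(2) that by blast
  ultimately show ?thesis
    unfolding splits_def by blast
qed

lemma splits_lca: "splits s a b \<Longrightarrow> is_lca par s a b"
  unfolding splits_def X_free_leaf_path_def using lca_of_children by blast

lemma splits_requested_anc: "splits s a b \<Longrightarrow> on_path par a b y \<Longrightarrow> anc par s y"
  using splits_lca unfolding is_lca_def on_path_def by blast

lemma splits_request_below:
  assumes "s \<in> X" "splits t a b" "on_path par a b y" "anc par s y" "anc par t s"
  shows "s = t"
proof (rule ccontr)
  assume "s \<noteq> t"
  obtain c l where c: "c \<in> children V r par t" and "anc par y l" and "anc par c l"
    and free: "\<And>z. anc par c z \<Longrightarrow> anc par z l \<Longrightarrow> z \<notin> X"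
    using assms(2,3) unfolding splits_def on_path_def X_free_leaf_path_def by blast
  have "anc par s l" using anc_trans[OF assms(4) \<open>anc par y l\<close>] .
  then have "anc par c s"
    using child_anc_below[OF c \<open>anc par c l\<close> assms(5)] \<open>s \<noteq> t\<close> by blast
  then show False using free \<open>anc par s l\<close> \<open>s \<in> X\<close> by blast
qed

lemma splits_unique_request:
  assumes "s \<in> X" "t \<in> X" "splits s a b" "splits t a' b'"
    and "on_path par a b y" "on_path par a' b' y"
  shows "s = t"
proof -
  have "anc par s y" "anc par t y"
    using splits_requested_anc assms(3-6) by blast+
  from anc_linear[OF this] show ?thesis
  proof
    assume "anc par s t"
    from splits_request_below[OF assms(2,3,5) \<open>anc par t y\<close> this] show ?thesis ..
  next
    assume "anc par t s"
    from splits_request_below[OF assms(1,4,6) \<open>anc par s y\<close> this] show ?thesis .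
  qed
qed

lemma splitting_maps_identify:
  assumes split: "\<forall>s\<in>X. splits s (\<pi> s) (\<sigma> s)"
  shows "identifies V r par X \<pi> \<sigma> \<and> unique_request par X \<pi> \<sigma>"
proof
  show unique: "unique_request par X \<pi> \<sigma>"
    unfolding unique_request_def using splits_unique_request split by blast
  have inj: "inj_on f X" if requested: "\<forall>s\<in>X. on_path par (\<pi> s) (\<sigma> s) (f s)" for f
  proof (rule inj_onI)
    fix s t assume st: "s \<in> X" "t \<in> X" "f s = f t"
    then have "on_path par (\<pi> s) (\<sigma> s) (f s)" "on_path par (\<pi> t) (\<sigma> t) (f s)"
      using requested by auto
    then show "s = t" using unique st(1,2) unfolding unique_request_def by blast
  qed
  have "inj_on \<pi> X" "inj_on \<sigma> X"
    by (rule inj, simp add: on_path_def anc_refl)+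
  moreover have "\<pi> ` X \<subseteq> leaves V r par" "\<sigma> ` X \<subseteq> leaves V r par"
    using split unfolding splits_def X_free_leaf_path_def by blast+
  ultimately show "identifies V r par X \<pi> \<sigma>"
    unfolding identifies_def using splits_lca split by blast
qed

end

theorem lemma3p8:
  fixes V :: "'a set" and r :: 'a and par :: "'a \<Rightarrow> 'a" and X :: "'a set"
  assumes "full_tree V r par"
    and "thin V r par X"
  shows "\<exists>\<pi> \<sigma>. identifies V r par X \<pi> \<sigma> \<and> unique_request par X \<pi> \<sigma>"
proof -
  interpret thin_in_tree V r par X
    using assms unfolding full_tree_def by unfold_locales blast+
  have "\<forall>s\<in>X. \<exists>a b. splits s a b"
    using splits_exists[OF assms(1)] by blast
  then obtain \<pi> \<sigma> where "\<forall>s\<in>X. splits s (\<pi> s) (\<sigma> s)"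
    by metis
  then show ?thesis
    using splitting_maps_identify by blast
qed

end
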